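(* Let $\mathcal{G}=(\mathcal{V},\mathcal{E})$ be a finite graph and let $$R(\mathcal{G})=\{x\in[0,1]^{\mathcal{V}}:\ \mathfrak{K}_{\mathcal{G}'}(x|_{\mathcal{G}'})>0\text{ for every induced subgraph }\mathcal{G}'\subseteq\mathcal{G}\}.$$ For a unit vector $u$ in the nonnegative orthant of $\mathbb{R}^{\mathcal{V}}$, let $$\rho(u)=\inf\{r\in[0,\infty):\ \min_{\mathcal{G}'\subseteq\mathcal{G}}\mathfrak{K}_{\mathcal{G}'}(ru|_{\mathcal{G}'})=0\},$$ the minimum over all induced subgraphs $\mathcal{G}'$. Then: (1) $\rho(u)=\min\{r\in[0,\infty):\mathfrak{K}_{\mathcal{G}}(ru)=0\}$ (in particular this minimum exists); (2) for $x\in[0,1]^{\mathcal{V}}\setminus\{0\}$, $x\in R(\mathcal{G})$ if and only if $|x|<\rho(x/|x|)$; (3) the map $u\mapsto\rho(u)$ is continuous on the set of unit vectors in the nonnegative orthant; (4) the map $\{y\in[0,1]^{\mathcal{V}}:|y|<1\}\to R(\mathcal{G})$, $y\mapsto\rho(y/|y|)\,y$ (interpreted as $0$ when $y=0$) is a homeomorphism.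
   Context: Graphs are finite, simple, undirected. A clique is a set of pairwise adjacent vertices (the empty set is a clique). An induced subgraph $\mathcal{G}'$ has vertex set $\mathcal{V}'\subseteq\mathcal{V}$ and all edges of $\mathcal{G}$ between vertices of $\mathcal{V}'$; $x|_{\mathcal{G}'}=(x_v)_{v\in\mathcal{V}'}$. $\mathfrak{K}_{\mathcal{G}}(x)=\sum_{\mathcal{K}\subseteq\mathcal{V}\text{ clique}}(-1)^{|\mathcal{K}|}\prod_{v\in\mathcal{K}}x_v$, the empty clique contributing $1$. $|\cdot|$ is the Euclidean norm. *)

theory Defs
  imports "HOL-Analysis.Analysis"
begin

text \<open>A finite simple graph on the finite vertex type 'v is given by an edge relation
  E (assumed symmetric and irreflexive in the theorem).
  An induced subgraph is determined by its vertex set S.\<close>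

definition is_clique :: "('v \<Rightarrow> 'v \<Rightarrow> bool) \<Rightarrow> 'v set \<Rightarrow> bool" where
  "is_clique E K \<longleftrightarrow> (\<forall>u\<in>K. \<forall>w\<in>K. u \<noteq> w \<longrightarrow> E u w)"

text \<open>Clique polynomial of the induced subgraph on S, evaluated at x restricted to S.\<close>
definition clique_poly :: "('v::finite \<Rightarrow> 'v \<Rightarrow> bool) \<Rightarrow> 'v set \<Rightarrow> real^'v \<Rightarrow> real" where
  "clique_poly E S x = (\<Sum>K\<in>{K. K \<subseteq> S \<and> is_clique E K}. (-1) ^ card K * (\<Prod>v\<in>K. x $ v))"

definition unit_cube :: "(real^'v) set" where
  "unit_cube = {x. \<forall>v. 0 \<le> x $ v \<and> x $ v \<le> 1}"

definition Rset :: "('v::finite \<Rightarrow> 'v \<Rightarrow> bool) \<Rightarrow> (real^'v) set" where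
  "Rset E = {x \<in> unit_cube. \<forall>S. clique_poly E S x > 0}"

definition rho :: "('v::finite \<Rightarrow> 'v \<Rightarrow> bool) \<Rightarrow> real^'v \<Rightarrow> real" where
  "rho E u = Inf {r. 0 \<le> r \<and> Min ((\<lambda>S. clique_poly E S (r *\<^sub>R u)) ` UNIV) = 0}"

definition unit_orthant :: "(real^'v) set" where
  "unit_orthant = {u. norm u = 1 \<and> (\<forall>v. 0 \<le> u $ v)}"

end

theory Submission
  imports Defs
begin

text \<open>Deleting a vertex v gives K_S(x) = K_{S-v}(x) - x_v K_{S \<inter> N(v)}(x). Hence, as long as all
  K_S are nonnegative, lowering a coordinate can only increase every K_S: the set where all K_S
  are positive is an open down-set, so along a ray it is an interval [0, \<rho>(u)). At \<rho>(u) all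
  K_S are nonnegative and one of them vanishes; K_V, the smallest, vanishes too, and at a
  vanishing K_S of minimal size the recursion makes K_S negative immediately beyond \<rho>(u).
  Positivity of all K_S and negativity of some K_S are open conditions, which gives lower and upper
  semicontinuity of \<rho>. Finally y \<mapsto> \<rho>(y/|y|) y rescales each ray by a continuous factor that
  is bounded and bounded away from 0 on the compact set of directions, so it is a homeomorphism,
  continuous at 0 as well.\<close>

lemma clique_poly_cong:
  assumes "\<And>v. v \<in> S \<Longrightarrow> x $ v = y $ v"
  shows "clique_poly E S x = clique_poly E S y"
  unfolding clique_poly_def
  by (intro sum.cong refl arg_cong[where f = "\<lambda>t. _ * t"] prod.cong) (use assms in auto)

lemma clique_poly_zero [simp]: "clique_poly E S 0 = 1"
proof -
  have "clique_poly E S 0 = (\<Sum>K\<in>{K. K \<subseteq> S \<and> is_clique E K}. if K = {} then 1 else 0)"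
    unfolding clique_poly_def by (intro sum.cong refl) (auto simp: finite_subset)
  also have "\<dots> = 1"
    by (simp add: sum.delta is_clique_def)
  finally show ?thesis .
qed

lemma clique_poly_empty [simp]: "clique_poly E {} x = 1"
proof -
  have "{K. K \<subseteq> {} \<and> is_clique E K} = {{}}"
    by (auto simp: is_clique_def)
  then show ?thesis unfolding clique_poly_def by simp
qed

lemma continuous_on_clique_poly [continuous_intros]:
  "continuous_on A f \<Longrightarrow> continuous_on A (\<lambda>t. clique_poly E S (f t))"
  unfolding clique_poly_def by (intro continuous_intros)

definition clique_polys_pos :: "('v::finite \<Rightarrow> 'v \<Rightarrow> bool) \<Rightarrow> real^'v \<Rightarrow> bool" where
  "clique_polys_pos E x \<longleftrightarrow> (\<forall>S. 0 < clique_poly E S x)"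

definition clique_polys_nonneg :: "('v::finite \<Rightarrow> 'v \<Rightarrow> bool) \<Rightarrow> real^'v \<Rightarrow> bool" where
  "clique_polys_nonneg E x \<longleftrightarrow> (\<forall>S. 0 \<le> clique_poly E S x)"

lemma clique_polys_pos_zero: "clique_polys_pos E 0"
  by (simp add: clique_polys_pos_def)

lemma clique_polys_pos_imp_nonneg: "clique_polys_pos E x \<Longrightarrow> clique_polys_nonneg E x"
  by (simp add: clique_polys_pos_def clique_polys_nonneg_def less_imp_le)

lemma open_clique_polys_pos: "open {x. clique_polys_pos E x}"
proof -
  have "{x. clique_polys_pos E x} = (\<Inter>S. {x. 0 < clique_poly E S x})"
    by (auto simp: clique_polys_pos_def)
  then show ?thesis
    by (auto intro!: open_INT open_Collect_less continuous_intros)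
qed

lemma Min_clique_polys_eq_zero_iff:
  "Min (range (\<lambda>S. clique_poly E S x)) = 0 \<longleftrightarrow>
     clique_polys_nonneg E x \<and> \<not> clique_polys_pos E x"
proof -
  let ?M = "Min (range (\<lambda>S. clique_poly E S x))"
  have M_in: "?M \<in> range (\<lambda>S. clique_poly E S x)" and M_le: "\<And>S. ?M \<le> clique_poly E S x"
    by (auto intro: Min_in)
  show ?thesis
    unfolding clique_polys_nonneg_def clique_polys_pos_def
  proof (intro iffI conjI allI)
    assume M: "?M = 0"
    then show "0 \<le> clique_poly E S x" for S
      using M_le[of S] by simp
    show "\<not> (\<forall>S. 0 < clique_poly E S x)"
      using M_in M by (metis imageE less_irrefl)
  next
    assume "(\<forall>S. 0 \<le> clique_poly E S x) \<and> \<not> (\<forall>S. 0 < clique_poly E S x)"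
    then obtain S where "\<forall>S. 0 \<le> clique_poly E S x" and "clique_poly E S x \<le> 0"
      by (auto simp: not_less)
    then show "?M = 0"
      using M_in M_le[of S] by (metis imageE order.antisym)
  qed
qed

lemma clique_polys_nonneg_at_limit:
  assumes "0 < t" and pos: "\<And>r. 0 \<le> r \<Longrightarrow> r < t \<Longrightarrow> clique_polys_pos E (r *\<^sub>R u)"
  shows "clique_polys_nonneg E (t *\<^sub>R u)"
  unfolding clique_polys_nonneg_def
proof
  fix S
  have "{0..<t} \<subseteq> {r. 0 \<le> clique_poly E S (r *\<^sub>R u)}"
    using pos by (auto simp: clique_polys_pos_def less_imp_le)
  moreover have "closed {r. 0 \<le> clique_poly E S (r *\<^sub>R u)}"
    by (intro closed_Collect_le continuous_intros)
  ultimately have "closure {0..<t} \<subseteq> {r. 0 \<le> clique_poly E S (r *\<^sub>R u)}"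
    by (rule closure_minimal)
  moreover have "t \<in> closure {0..<t}"
    using \<open>0 < t\<close> by simp
  ultimately show "0 \<le> clique_poly E S (t *\<^sub>R u)"
    by blast
qed

lemma unit_cube_norm_less_one:
  "{y \<in> unit_cube. norm y < 1} = {y :: real^'v. (\<forall>v. 0 \<le> y $ v) \<and> norm y < 1}"
proof -
  have "y $ v \<le> 1" if "norm y < 1" for y :: "real^'v" and v
    using abs_ge_self[of "y $ v"] component_le_norm_cart[of y v] that by linarith
  then show ?thesis
    by (auto simp: unit_cube_def)
qed

lemma unit_orthantD:
  assumes "u \<in> unit_orthant"
  shows "0 \<le> u $ v" and "u \<noteq> 0"
  using assms by (auto simp: unit_orthant_def)

lemma compact_unit_orthant: "compact unit_orthant"
proof -
  have "unit_orthant = sphere 0 1 \<inter> (\<Inter>v. {u. 0 \<le> u $ v})"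
    by (auto simp: unit_orthant_def)
  moreover have "closed {u::real^'v. 0 \<le> u $ v}" for v
    by (intro closed_Collect_le continuous_intros)
  ultimately show ?thesis
    by (metis closed_INT compact_Int_closed compact_sphere)
qed

locale simple_graph =
  fixes E :: "'v::finite \<Rightarrow> 'v \<Rightarrow> bool"
  assumes sym: "\<And>u w. E u w \<Longrightarrow> E w u"
    and irrefl: "\<And>u. \<not> E u u"
begin

abbreviation P :: "'v set \<Rightarrow> real^'v \<Rightarrow> real" where
  "P \<equiv> clique_poly E"

lemma clique_poly_delete_vertex:
  assumes "v \<in> S"
  shows "P S x = P (S - {v}) x - x $ v * P (S \<inter> {w. E v w}) x"
proof -
  define C where "C T = {K. K \<subseteq> T \<and> is_clique E K}" for T
  define t where "t K = (-1::real) ^ card K * (\<Prod>v\<in>K. x $ v)" for K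
  have P_eq: "P T x = sum t (C T)" for T
    unfolding clique_poly_def C_def t_def by simp
  have split: "C S = C (S - {v}) \<union> insert v ` C (S \<inter> {w. E v w})"
  proof (intro equalityI subsetI)
    fix K assume K: "K \<in> C S"
    show "K \<in> C (S - {v}) \<union> insert v ` C (S \<inter> {w. E v w})"
    proof (cases "v \<in> K")
      case True
      then have "K - {v} \<in> C (S \<inter> {w. E v w})" and "K = insert v (K - {v})"
        using K by (auto simp: C_def is_clique_def)
      then show ?thesis by blast
    qed (use K in \<open>auto simp: C_def\<close>)
  qed (use assms in \<open>auto simp: C_def is_clique_def intro: sym\<close>)
  have disjoint: "C (S - {v}) \<inter> insert v ` C (S \<inter> {w. E v w}) = {}"
    by (auto simp: C_def)
  have v_notin: "v \<notin> K" if "K \<in> C (S \<inter> {w. E v w})" for K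
    using that irrefl by (auto simp: C_def)
  have "inj_on (insert v) (C (S \<inter> {w. E v w}))"
    using v_notin by (intro inj_onI) (metis insert_ident)
  then have "sum t (insert v ` C (S \<inter> {w. E v w})) = (\<Sum>K\<in>C (S \<inter> {w. E v w}). t (insert v K))"
    by (simp add: sum.reindex)
  also have "\<dots> = - (x $ v * sum t (C (S \<inter> {w. E v w})))"
    using v_notin by (simp add: t_def sum_distrib_left flip: sum_negf)
      (intro sum.cong refl, auto simp: C_def finite_subset)
  finally show ?thesis
    unfolding P_eq split by (subst sum.union_disjoint) (auto simp: disjoint)
qed

lemma clique_poly_change_vertex:
  assumes "v \<in> S" and "\<And>w. w \<noteq> v \<Longrightarrow> y $ w = x $ w"
  shows "P S y = P S x - (y $ v - x $ v) * P (S \<inter> {w. E v w}) x"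
proof -
  have "P (S - {v}) y = P (S - {v}) x"
    using assms(2) by (intro clique_poly_cong) auto
  moreover have "P (S \<inter> {w. E v w}) y = P (S \<inter> {w. E v w}) x"
    using assms(2) irrefl by (intro clique_poly_cong) (metis Int_iff mem_Collect_eq)
  ultimately show ?thesis
    using clique_poly_delete_vertex[OF assms(1), of x] clique_poly_delete_vertex[OF assms(1), of y]
    by (simp add: algebra_simps)
qed

lemma clique_poly_singleton: "P {v} x = 1 - x $ v"
  using clique_poly_delete_vertex[of v "{v}" x] irrefl[of v] by simp

lemma clique_polys_pos_imp_less_one: "clique_polys_pos E x \<Longrightarrow> x $ v < 1"
  by (metis clique_polys_pos_def clique_poly_singleton diff_gt_0_iff_gt)

lemma clique_poly_antimono:
  assumes y: "clique_polys_nonneg E y" and le: "\<And>v. x $ v \<le> y $ v"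
  shows "P S y \<le> P S x"
proof -
  define z where "z D = (\<chi> i. if i \<in> D then x $ i else y $ i)" for D
  have "\<forall>S. P S y \<le> P S (z D)" if "finite D" for D
    using that
  proof (induction D rule: finite_induct)
    case empty
    have "z {} = y" by (simp add: z_def vec_eq_iff)
    then show ?case by simp
  next
    case (insert v D)
    have step: "P S (z D) \<le> P S (z (insert v D))" for S
    proof (cases "v \<in> S")
      case True
      have "0 \<le> P (S \<inter> {w. E v w}) (z D)"
        using insert.IH y by (meson clique_polys_nonneg_def order_trans)
      moreover have "z (insert v D) $ v - z D $ v \<le> 0"
        using le[of v] insert.hyps(2) by (simp add: z_def)
      ultimately show ?thesis
        using clique_poly_change_vertex[OF True, of "z (insert v D)" "z D"]
        by (simp add: z_def mult_nonpos_nonneg)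
    next
      case False
      then show ?thesis by (intro eq_refl clique_poly_cong) (auto simp: z_def)
    qed
    show ?case using insert.IH step by (meson order_trans)
  qed
  moreover have "z UNIV = x" by (simp add: z_def vec_eq_iff)
  ultimately show ?thesis by (metis finite)
qed

lemma clique_polys_nonneg_downward:
  "clique_polys_nonneg E y \<Longrightarrow> (\<And>v. x $ v \<le> y $ v) \<Longrightarrow> clique_polys_nonneg E x"
  by (meson clique_poly_antimono clique_polys_nonneg_def order_trans)

lemma clique_polys_pos_downward:
  "clique_polys_pos E y \<Longrightarrow> (\<And>v. x $ v \<le> y $ v) \<Longrightarrow> clique_polys_pos E x"
  by (meson clique_poly_antimono clique_polys_pos_def clique_polys_pos_imp_nonneg less_le_trans)

lemma clique_poly_antimono_set:
  assumes x: "clique_polys_nonneg E x" "\<And>v. 0 \<le> x $ v" and "S \<subseteq> T"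
  shows "P T x \<le> P S x"
proof -
  have "P (S \<union> D) x \<le> P S x" if "finite D" for D
    using that
  proof (induction D rule: finite_induct)
    case (insert v D)
    show ?case
    proof (cases "v \<in> S \<union> D")
      case False
      have "P (S \<union> insert v D) x = P (S \<union> D) x - x $ v * P ((S \<union> insert v D) \<inter> {w. E v w}) x"
        using clique_poly_delete_vertex[of v "S \<union> insert v D" x] False
        by (simp add: insert_Diff_if)
      moreover have "0 \<le> x $ v * P ((S \<union> insert v D) \<inter> {w. E v w}) x"
        using x by (simp add: clique_polys_nonneg_def)
      ultimately show ?thesis using insert.IH by linarith
    qed (use insert in \<open>simp add: insert_absorb\<close>)
  qed simp
  from this[of T] show ?thesis using \<open>S \<subseteq> T\<close> by (simp add: Un_absorb1)
qed

text \<open>At a root S of minimal size, deleting a vertex v with x_v \<noteq> 0 leaves the factor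
  P (S \<inter> N(v)) x, which is strictly positive, so raising x_v alone makes P S negative.\<close>

lemma not_clique_polys_nonneg_beyond_root:
  assumes x: "clique_polys_nonneg E x" and root: "P S x = 0"
    and le: "\<And>v. x $ v \<le> y $ v" and strict: "\<And>v. x $ v \<noteq> 0 \<Longrightarrow> x $ v < y $ v"
  shows "\<not> clique_polys_nonneg E y"
proof
  assume y: "clique_polys_nonneg E y"
  obtain S' where S': "P S' x = 0" and minimal: "\<And>T. P T x = 0 \<Longrightarrow> card S' \<le> card T"
    using ex_has_least_nat[of "\<lambda>T. P T x = 0" S card] root by blast
  have "\<exists>v\<in>S'. x $ v \<noteq> 0"
  proof (rule ccontr)
    assume "\<not> ?thesis"
    then have "P S' x = P S' 0" by (intro clique_poly_cong) auto
    then show False using S' by simp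
  qed
  then obtain v where v: "v \<in> S'" "x $ v \<noteq> 0" by blast
  have "card (S' \<inter> {w. E v w}) < card S'"
    using v(1) irrefl[of v] by (intro psubset_card_mono) auto
  then have "P (S' \<inter> {w. E v w}) x \<noteq> 0"
    using minimal by fastforce
  then have pos: "0 < P (S' \<inter> {w. E v w}) x"
    using x by (simp add: clique_polys_nonneg_def order_less_le)
  define x' where "x' = (\<chi> w. if w = v then y $ v else x $ w)"
  have "P S' x' = - ((y $ v - x $ v) * P (S' \<inter> {w. E v w}) x)"
    using clique_poly_change_vertex[OF v(1), of x' x] S' by (simp add: x'_def)
  also have "\<dots> < 0"
    using strict[OF v(2)] pos by simp
  finally have "P S' x' < 0" .
  moreover have "clique_polys_nonneg E x'"
    using y by (rule clique_polys_nonneg_downward) (simp add: x'_def le)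
  ultimately show False
    by (simp add: clique_polys_nonneg_def not_le[symmetric])
qed

context
  fixes u :: "real^'v"
  assumes u_nonneg: "\<And>v. 0 \<le> u $ v" and u_nonzero: "u \<noteq> 0"
begin

lemma ray_threshold:
  obtains t where "0 < t" and "\<And>r. 0 \<le> r \<Longrightarrow> clique_polys_pos E (r *\<^sub>R u) \<longleftrightarrow> r < t"
    and "clique_polys_nonneg E (t *\<^sub>R u)"
proof -
  define B where "B = {r. 0 \<le> r \<and> \<not> clique_polys_pos E (r *\<^sub>R u)}"
  obtain c where c: "0 < u $ c"
    using u_nonneg u_nonzero by (metis order_le_less vec_eq_iff zero_index)
  have "P {c} ((1 / u $ c) *\<^sub>R u) = 0"
    using c by (simp add: clique_poly_singleton)
  then have "1 / u $ c \<in> B"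
    using c by (simp add: B_def clique_polys_pos_def) (metis less_irrefl)
  then have B_nonempty: "B \<noteq> {}" by blast
  have B_bdd: "bdd_below B"
    by (auto simp: B_def intro: bdd_belowI[of _ 0])
  have "B = {0..} \<inter> (\<Union>S. {r. P S (r *\<^sub>R u) \<le> 0})"
    by (auto simp: B_def clique_polys_pos_def not_less)
  then have "closed B"
    by (auto intro!: closed_Int closed_UN closed_Collect_le continuous_intros)
  define t where "t = Inf B"
  have t_in: "t \<in> B"
    unfolding t_def using B_nonempty B_bdd \<open>closed B\<close> by (rule closed_contains_Inf)
  have pos_iff: "clique_polys_pos E (r *\<^sub>R u) \<longleftrightarrow> r < t" if "0 \<le> r" for r
  proof
    assume "clique_polys_pos E (r *\<^sub>R u)"
    moreover have "t \<le> r \<Longrightarrow> (t *\<^sub>R u) $ v \<le> (r *\<^sub>R u) $ v" for v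
      using u_nonneg[of v] by (simp add: mult_right_mono)
    ultimately show "r < t"
      using t_in clique_polys_pos_downward by (force simp: B_def)
  next
    assume "r < t"
    then show "clique_polys_pos E (r *\<^sub>R u)"
      using that cInf_lower[OF _ B_bdd, of r] by (auto simp: B_def t_def)
  qed
  have "t \<noteq> 0"
    using t_in clique_polys_pos_zero[of E] by (auto simp: B_def)
  then have "0 < t"
    using t_in by (simp add: B_def)
  have "clique_polys_nonneg E (t *\<^sub>R u)"
    using \<open>0 < t\<close> pos_iff by (intro clique_polys_nonneg_at_limit) auto
  then show thesis
    using that \<open>0 < t\<close> pos_iff by blast
qed

lemma rho_eq_ray_threshold:
  assumes pos_iff: "\<And>r. 0 \<le> r \<Longrightarrow> clique_polys_pos E (r *\<^sub>R u) \<longleftrightarrow> r < t"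
    and "0 < t" and "clique_polys_nonneg E (t *\<^sub>R u)"
  shows "rho E u = t"
proof -
  have "rho E u = Inf {r. 0 \<le> r \<and> clique_polys_nonneg E (r *\<^sub>R u) \<and> \<not> clique_polys_pos E (r *\<^sub>R u)}"
    by (simp add: rho_def Min_clique_polys_eq_zero_iff)
  also have "\<dots> = t"
  proof (rule cInf_eq_minimum)
    show "t \<in> {r. 0 \<le> r \<and> clique_polys_nonneg E (r *\<^sub>R u) \<and> \<not> clique_polys_pos E (r *\<^sub>R u)}"
      using assms by simp
  next
    fix r assume "r \<in> {r. 0 \<le> r \<and> clique_polys_nonneg E (r *\<^sub>R u) \<and> \<not> clique_polys_pos E (r *\<^sub>R u)}"
    then show "t \<le> r"
      using pos_iff[of r] by auto
  qed
  finally show ?thesis .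
qed

lemma rho_is_ray_threshold:
  "0 < rho E u \<and> (\<forall>r\<ge>0. clique_polys_pos E (r *\<^sub>R u) \<longleftrightarrow> r < rho E u) \<and>
   clique_polys_nonneg E (rho E u *\<^sub>R u)"
proof -
  obtain t where "0 < t" and "\<And>r. 0 \<le> r \<Longrightarrow> clique_polys_pos E (r *\<^sub>R u) \<longleftrightarrow> r < t"
    and "clique_polys_nonneg E (t *\<^sub>R u)"
    using ray_threshold by blast
  moreover from this have "rho E u = t"
    by (intro rho_eq_ray_threshold)
  ultimately show ?thesis by simp
qed

lemma rho_pos: "0 < rho E u"
  using rho_is_ray_threshold by blast

lemma clique_polys_pos_ray_iff:
  "0 \<le> r \<Longrightarrow> clique_polys_pos E (r *\<^sub>R u) \<longleftrightarrow> r < rho E u"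
  using rho_is_ray_threshold by blast

lemma clique_polys_nonneg_at_rho: "clique_polys_nonneg E (rho E u *\<^sub>R u)"
  using rho_is_ray_threshold by blast

lemma rho_le_root: "0 \<le> r \<Longrightarrow> P S (r *\<^sub>R u) = 0 \<Longrightarrow> rho E u \<le> r"
  using clique_polys_pos_ray_iff by (metis clique_polys_pos_def less_irrefl not_less)

lemma clique_poly_root_at_rho: "\<exists>S. P S (rho E u *\<^sub>R u) = 0"
proof -
  have "\<not> clique_polys_pos E (rho E u *\<^sub>R u)"
    using clique_polys_pos_ray_iff[of "rho E u"] rho_pos by simp
  then obtain S where "P S (rho E u *\<^sub>R u) \<le> 0"
    by (auto simp: clique_polys_pos_def not_less)
  then show ?thesis
    using clique_polys_nonneg_at_rho by (metis clique_polys_nonneg_def order.antisym)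
qed

lemma clique_poly_UNIV_at_rho: "P UNIV (rho E u *\<^sub>R u) = 0"
proof -
  obtain S where "P S (rho E u *\<^sub>R u) = 0"
    using clique_poly_root_at_rho by blast
  moreover have "P UNIV (rho E u *\<^sub>R u) \<le> P S (rho E u *\<^sub>R u)"
    using clique_polys_nonneg_at_rho rho_pos u_nonneg by (intro clique_poly_antimono_set) auto
  ultimately show ?thesis
    using clique_polys_nonneg_at_rho by (metis clique_polys_nonneg_def order.antisym)
qed

lemma clique_poly_ray_neg_iff:
  assumes "0 \<le> r"
  shows "(\<exists>S. P S (r *\<^sub>R u) < 0) \<longleftrightarrow> rho E u < r"
proof
  assume "rho E u < r"
  moreover obtain S where "P S (rho E u *\<^sub>R u) = 0"
    using clique_poly_root_at_rho by blast
  ultimately have "\<not> clique_polys_nonneg E (r *\<^sub>R u)"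
    using clique_polys_nonneg_at_rho rho_pos u_nonneg
    by (intro not_clique_polys_nonneg_beyond_root[where x = "rho E u *\<^sub>R u" and S = S])
      (auto simp: mult_right_mono order_le_less intro!: mult_strict_right_mono)
  then show "\<exists>S. P S (r *\<^sub>R u) < 0"
    by (auto simp: clique_polys_nonneg_def not_le)
next
  assume "\<exists>S. P S (r *\<^sub>R u) < 0"
  moreover have "r \<le> rho E u \<Longrightarrow> clique_polys_nonneg E (r *\<^sub>R u)"
    using clique_polys_nonneg_at_rho u_nonneg
    by (elim clique_polys_nonneg_downward) (simp add: mult_right_mono)
  ultimately show "rho E u < r"
    by (meson clique_polys_nonneg_def not_le)
qed

end

lemma openin_rho_greater: "openin (top_of_set unit_orthant) {u \<in> unit_orthant. a < rho E u}"
proof (cases "a < 0")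
  case True
  have "0 < rho E u" if "u \<in> unit_orthant" for u
    by (rule rho_pos) (use unit_orthantD[OF that] in auto)
  then have "{u \<in> unit_orthant. a < rho E u} = unit_orthant"
    using True by (auto intro: less_trans)
  then show ?thesis by simp
next
  case False
  have "a < rho E u \<longleftrightarrow> clique_polys_pos E (a *\<^sub>R u)" if "u \<in> unit_orthant" for u
    by (rule clique_polys_pos_ray_iff[symmetric]) (use unit_orthantD[OF that] False in auto)
  then have "{u \<in> unit_orthant. a < rho E u} =
      unit_orthant \<inter> (\<lambda>u. a *\<^sub>R u) -` {x. clique_polys_pos E x}"
    by blast
  then show ?thesis
    by (simp only:) (intro continuous_openin_preimage_gen continuous_intros open_clique_polys_pos)
qed

lemma openin_rho_less: "openin (top_of_set unit_orthant) {u \<in> unit_orthant. rho E u < a}"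
proof (cases "a \<le> 0")
  case True
  have "0 < rho E u" if "u \<in> unit_orthant" for u
    by (rule rho_pos) (use unit_orthantD[OF that] in auto)
  then have "{u \<in> unit_orthant. rho E u < a} = {}"
    using True by fastforce
  then show ?thesis by (metis openin_empty)
next
  case False
  have "rho E u < a \<longleftrightarrow> (\<exists>S. P S (a *\<^sub>R u) < 0)" if "u \<in> unit_orthant" for u
    by (rule clique_poly_ray_neg_iff[symmetric]) (use unit_orthantD[OF that] False in auto)
  then have "{u \<in> unit_orthant. rho E u < a} =
      unit_orthant \<inter> (\<lambda>u. a *\<^sub>R u) -` (\<Union>S. {x. P S x < 0})"
    by blast
  then show ?thesis
    by (simp only:) (intro continuous_openin_preimage_gen continuous_intros open_UN ballI open_Collect_less)
qed

lemma continuous_on_rho: "continuous_on unit_orthant (rho E)"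
  using openin_rho_greater openin_rho_less
  unfolding continuous_map_iff_continuous[symmetric] continuous_map_upper_lower_semicontinuous_lt
  by simp

lemma clique_polys_pos_iff_norm_less_rho:
  assumes x: "\<And>v. 0 \<le> x $ v" and "x \<noteq> 0"
  shows "clique_polys_pos E x \<longleftrightarrow> norm x < rho E (sgn x)"
proof -
  have "\<And>v. 0 \<le> sgn x $ v" and "sgn x \<noteq> 0"
    using assms by (simp_all add: sgn_vec_def)
  moreover have "x = norm x *\<^sub>R sgn x"
    using \<open>x \<noteq> 0\<close> by (simp add: sgn_vec_def)
  ultimately show ?thesis
    by (metis clique_polys_pos_ray_iff norm_ge_zero)
qed

lemma Rset_eq: "Rset E = {x. (\<forall>v. 0 \<le> x $ v) \<and> clique_polys_pos E x}"
  using clique_polys_pos_imp_less_one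
  by (auto simp: Rset_def unit_cube_def clique_polys_pos_def less_imp_le)

lemma rho_radial_image:
  "(\<lambda>y. rho E (sgn y) *\<^sub>R y) ` {y \<in> unit_cube. norm y < 1} = Rset E"
  unfolding unit_cube_norm_less_one
proof (intro equalityI subsetI)
  fix x assume "x \<in> (\<lambda>y. rho E (sgn y) *\<^sub>R y) ` {y. (\<forall>v. 0 \<le> y $ v) \<and> norm y < 1}"
  then obtain y where y: "\<And>v. 0 \<le> y $ v" "norm y < 1" and x: "x = rho E (sgn y) *\<^sub>R y"
    by auto
  show "x \<in> Rset E"
  proof (cases "y = 0")
    case False
    have "0 < rho E (sgn y)"
      using y False by (intro rho_pos) (simp_all add: sgn_vec_def)
    then have "norm x < rho E (sgn y)" and "sgn x = sgn y" and "\<And>v. 0 \<le> x $ v" and "x \<noteq> 0"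
      using y False by (simp_all add: x sgn_scaleR)
    then show ?thesis
      using clique_polys_pos_iff_norm_less_rho by (simp add: Rset_eq)
  qed (simp add: x Rset_eq clique_polys_pos_zero)
next
  fix x assume x: "x \<in> Rset E"
  show "x \<in> (\<lambda>y. rho E (sgn y) *\<^sub>R y) ` {y. (\<forall>v. 0 \<le> y $ v) \<and> norm y < 1}"
  proof (cases "x = 0")
    case False
    have x_nonneg: "\<And>v. 0 \<le> x $ v" and "norm x < rho E (sgn x)"
      using x False clique_polys_pos_iff_norm_less_rho by (auto simp: Rset_eq)
    moreover have rho: "0 < rho E (sgn x)"
      using x_nonneg False by (intro rho_pos) (simp_all add: sgn_vec_def)
    define y where "y = x /\<^sub>R rho E (sgn x)"
    have "norm y < 1" and "\<And>v. 0 \<le> y $ v" and "sgn y = sgn x"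
      using calculation rho by (simp_all add: y_def sgn_scaleR field_simps)
    moreover have "x = rho E (sgn y) *\<^sub>R y"
      using rho \<open>sgn y = sgn x\<close> by (simp add: y_def)
    ultimately show ?thesis by blast
  qed (auto simp: image_iff intro!: exI[of _ 0])
qed

end

lemma continuous_on_radial_scaling:
  fixes c :: "'a::real_normed_vector \<Rightarrow> real"
  assumes c: "continuous_on U c" and bounded: "bounded (c ` U)" and dirs: "sgn ` (A - {0}) \<subseteq> U"
  shows "continuous_on A (\<lambda>y. c (sgn y) *\<^sub>R y)"
  unfolding continuous_on_eq_continuous_within
proof
  fix y assume "y \<in> A"
  show "continuous (at y within A) (\<lambda>y. c (sgn y) *\<^sub>R y)"
  proof (cases "y = 0")
    case False
    have "continuous_on (A - {0}) (\<lambda>y. c (sgn y) *\<^sub>R y)"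
      by (intro continuous_intros continuous_on_compose2[OF c]) (use dirs in auto)
    then have "continuous (at y within A - {0}) (\<lambda>y. c (sgn y) *\<^sub>R y)"
      using \<open>y \<in> A\<close> False continuous_on_eq_continuous_within by blast
    moreover have "at y within A = at y within (A - {0})"
      by (rule at_within_nhd[of y "- {0}"]) (use False in auto)
    ultimately show ?thesis by simp
  next
    case True
    obtain M where M: "\<And>u. u \<in> U \<Longrightarrow> \<bar>c u\<bar> \<le> M"
      using bounded by (auto simp: bounded_iff)
    have "((\<lambda>y. c (sgn y) *\<^sub>R y) \<longlongrightarrow> 0) (at 0 within A)"
    proof (rule Lim_null_comparison)
      show "\<forall>\<^sub>F y in at 0 within A. norm (c (sgn y) *\<^sub>R y) \<le> M * norm y"
        unfolding eventually_at_filter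
        by (intro always_eventually) (use dirs M in \<open>auto intro!: mult_right_mono\<close>)
      show "((\<lambda>y. M * norm y) \<longlongrightarrow> 0) (at 0 within A)"
        by (auto intro!: tendsto_eq_intros)
    qed
    then show ?thesis
      using True by (simp add: continuous_within)
  qed
qed

lemma homeomorphism_radial_scaling:
  fixes c :: "'a::real_normed_vector \<Rightarrow> real"
  assumes "compact U" and c: "continuous_on U c" and c_pos: "\<And>u. u \<in> U \<Longrightarrow> 0 < c u"
    and dirs: "sgn ` (A - {0}) \<subseteq> U" and image: "(\<lambda>y. c (sgn y) *\<^sub>R y) ` A = B"
  shows "homeomorphism A B (\<lambda>y. c (sgn y) *\<^sub>R y) (\<lambda>x. x /\<^sub>R c (sgn x))"
proof -
  have sgn_scaled: "sgn (c (sgn y) *\<^sub>R y) = sgn y" if "y \<in> A" for y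
    using that dirs c_pos[of "sgn y"] by (cases "y = 0") (auto simp: sgn_scaleR)
  have inverse: "(c (sgn y) *\<^sub>R y) /\<^sub>R c (sgn (c (sgn y) *\<^sub>R y)) = y" if "y \<in> A" for y
    using that dirs c_pos[of "sgn y"] sgn_scaled[OF that] by (cases "y = 0") auto
  have "sgn ` (B - {0}) \<subseteq> U"
  proof
    fix d assume "d \<in> sgn ` (B - {0})"
    then obtain y where "y \<in> A" "c (sgn y) *\<^sub>R y \<noteq> 0" and "d = sgn (c (sgn y) *\<^sub>R y)"
      using image by blast
    then show "d \<in> U"
      using dirs sgn_scaled by fastforce
  qed
  moreover have "continuous_on U (\<lambda>u. inverse (c u))"
    using c_pos by (intro continuous_on_inverse c) (metis less_irrefl)
  ultimately have "continuous_on B (\<lambda>x. inverse (c (sgn x)) *\<^sub>R x)"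
    using \<open>compact U\<close>
    by (intro continuous_on_radial_scaling compact_imp_bounded compact_continuous_image)
  moreover have "continuous_on A (\<lambda>y. c (sgn y) *\<^sub>R y)"
    using c dirs \<open>compact U\<close>
    by (intro continuous_on_radial_scaling compact_imp_bounded compact_continuous_image)
  ultimately show ?thesis
    using inverse sgn_scaled by (intro homeomorphismI) (auto simp flip: image)
qed

theorem lemma4p3:
  fixes E :: "'v::finite \<Rightarrow> 'v \<Rightarrow> bool"
  assumes sym: "\<And>u w. E u w \<Longrightarrow> E w u"
    and irrefl: "\<And>u. \<not> E u u"
  shows "(\<forall>u\<in>unit_orthant.
            0 \<le> rho E u \<and> clique_poly E UNIV (rho E u *\<^sub>R u) = 0 \<and>
            (\<forall>r. 0 \<le> r \<and> clique_poly E UNIV (r *\<^sub>R u) = 0 \<longrightarrow> rho E u \<le> r))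
       \<and> (\<forall>x\<in>unit_cube - {0}. x \<in> Rset E \<longleftrightarrow> norm x < rho E (x /\<^sub>R norm x))
       \<and> continuous_on unit_orthant (rho E)
       \<and> (\<exists>g. homeomorphism {y \<in> unit_cube. norm y < 1} (Rset E)
               (\<lambda>y. if y = 0 then 0 else rho E (y /\<^sub>R norm y) *\<^sub>R y) g)"
proof -
  interpret simple_graph E
    using sym irrefl by unfold_locales
  have rho_min_root: "0 \<le> rho E u \<and> clique_poly E UNIV (rho E u *\<^sub>R u) = 0 \<and>
      (\<forall>r. 0 \<le> r \<and> clique_poly E UNIV (r *\<^sub>R u) = 0 \<longrightarrow> rho E u \<le> r)"
    if "u \<in> unit_orthant" for u
    using unit_orthantD[OF that] rho_pos clique_poly_UNIV_at_rho rho_le_root by (meson less_imp_le)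
  have Rset_iff: "x \<in> Rset E \<longleftrightarrow> norm x < rho E (x /\<^sub>R norm x)" if "x \<in> unit_cube - {0}" for x
    using that clique_polys_pos_iff_norm_less_rho[of x]
    by (auto simp: Rset_def unit_cube_def clique_polys_pos_def sgn_div_norm)
  have dirs: "sgn ` ({y \<in> unit_cube. norm y < 1} - {0}) \<subseteq> unit_orthant"
    by (auto simp: unit_orthant_def unit_cube_def sgn_vec_def norm_sgn)
  have rho_pos: "0 < rho E u" if "u \<in> unit_orthant" for u
    using rho_pos[OF unit_orthantD(1)[OF that] unit_orthantD(2)[OF that]] .
  have "homeomorphism {y \<in> unit_cube. norm y < 1} (Rset E)
      (\<lambda>y. rho E (sgn y) *\<^sub>R y) (\<lambda>x. x /\<^sub>R rho E (sgn x))"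
    by (rule homeomorphism_radial_scaling[OF compact_unit_orthant continuous_on_rho rho_pos dirs
          rho_radial_image])
  moreover have "(\<lambda>y. if y = 0 then 0 else rho E (y /\<^sub>R norm y) *\<^sub>R y) = (\<lambda>y. rho E (sgn y) *\<^sub>R y)"
    by (auto simp: sgn_div_norm)
  ultimately show ?thesis
    using rho_min_root Rset_iff continuous_on_rho by auto
qed

end
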